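(* Let $\lambda>0$, $p\in(0,1)$, let $B\ge1$ be an integer, $\alpha>2$, $d>0$, $\theta>0$, $R=\log(1+\theta)$, $\lambda_{max}=\frac{1}{d^2\theta^{2/\alpha}\kappa(\alpha)}$ with $\kappa(\alpha)=\frac{2\pi^2}{\alpha\sin(2\pi/\alpha)}$. Let $f_B:[0,1]\to\mathbb{R}$ be as defined in the context and $$C_B(q)=\lambda f_B(q)\exp\!\Big(-\frac{\lambda f_B(q)}{\lambda_{max}}\Big)R .$$ If there exists $\hat q\in[0,1]$ with $f_B(\hat q)=\frac{\lambda_{max}}{\lambda}$, then $q^\star=\hat q$ maximizes $C_B$ over $[0,1]$; otherwise $q^\star=1$ maximizes $C_B$ over $[0,1]$.
   Context: For $q\in(0,1]$ define $r_B(q)$ by: if $B=1$, $r_1(q)=\frac{p}{p+q-pq}$; if $B>1$ and $q\ne p$, $r_B(q)=\frac{\frac{p}{q}(1-\rho^B)}{1-\frac{p}{q}\rho^B}$ with $\rho=\frac{p(1-q)}{q(1-p)}$; if $B>1$ and $q=p$, $r_B(p)=\frac{B}{B+1-p}$. Set $f_B(q)=q\,r_B(q)$ for $q\in(0,1]$ and $f_B(0)=0$. Model: transmitters form a homogeneous Poisson point process of density $\lambda$ in $\mathbb{R}^2$, each with receiver at distance $d$, path-loss exponent $\alpha$, Rayleigh fading, success if SIR exceeds $\theta$; each transmitter harvests one energy unit per slot with probability $p$, stores it in a battery of capacity $B$, and when the battery is nonempty transmits with unit power with ALOHA probability $q$. Then $r_B(q)$ is the stationary probability that the battery is nonempty and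 $C_B(q)$ is the transmission capacity; the optimal ALOHA probability maximizes $C_B$. *)

theory Defs
  imports "HOL-Analysis.Analysis"
begin

text \<open>Stationary probability that the battery is nonempty (capacity B, harvest prob p, ALOHA prob q).\<close>
definition r_B :: "real \<Rightarrow> nat \<Rightarrow> real \<Rightarrow> real" where
  "r_B p B q =
     (if B = 1 then p / (p + q - p * q)
      else if q \<noteq> p then
        (let \<rho> = (p * (1 - q)) / (q * (1 - p))
         in ((p / q) * (1 - \<rho> ^ B)) / (1 - (p / q) * \<rho> ^ B))
      else real B / (real B + 1 - p))"

definition f_B :: "real \<Rightarrow> nat \<Rightarrow> real \<Rightarrow> real" where
  "f_B p B q = (if q = 0 then 0 else q * r_B p B q)"

definition kappa :: "real \<Rightarrow> real" where
  "kappa \<alpha> = 2 * pi ^ 2 / (\<alpha> * sin (2 * pi / \<alpha>))"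

definition lambda_max :: "real \<Rightarrow> real \<Rightarrow> real \<Rightarrow> real" where
  "lambda_max d \<theta> \<alpha> = 1 / (d ^ 2 * \<theta> powr (2 / \<alpha>) * kappa \<alpha>)"

definition C_B :: "real \<Rightarrow> real \<Rightarrow> nat \<Rightarrow> real \<Rightarrow> real \<Rightarrow> real \<Rightarrow> real \<Rightarrow> real" where
  "C_B lam p B \<alpha> d \<theta> q =
     lam * f_B p B q * exp (- lam * f_B p B q / lambda_max d \<theta> \<alpha>) * ln (1 + \<theta>)"

end

theory Submission
  imports Defs
begin

text \<open>
  Writing \<open>y(q) = \<lambda> f\<^sub>B(q) / \<lambda>\<^sub>m\<^sub>a\<^sub>x\<close>, the capacity is a positive multiple of
  \<open>y e\<^sup>-\<^sup>y\<close>, which is increasing on \<open>(-\<infinity>, 1]\<close> with global maximum at \<open>y = 1\<close>.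
  Clearing denominators in \<open>r\<^sub>B\<close> shows that \<open>f\<^sub>B\<close> is a rational function with nonvanishing
  denominator on \<open>[0, 1]\<close>, so it is continuous there, takes values in \<open>[0, p]\<close>,
  and \<open>f\<^sub>B(0) = 0\<close>, \<open>f\<^sub>B(1) = p\<close>. Hence the level \<open>y = 1\<close> is reached iff
  \<open>\<lambda>\<^sub>m\<^sub>a\<^sub>x / \<lambda> \<le> p\<close>; otherwise \<open>y < 1\<close> throughout and \<open>y\<close> is largest at \<open>q = 1\<close>.
\<close>

lemma mult_exp_neg_le_exp_neg_one: "(x::real) * exp (- x) \<le> exp (- 1)"
proof -
  have "x * exp (- x) \<le> exp (x - 1) * exp (- x)"
    using exp_ge_add_one_self[of "x - 1"] by (simp add: mult_right_mono)
  also have "\<dots> = exp (- 1)" by (simp flip: exp_add)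
  finally show ?thesis .
qed

lemma mult_exp_neg_mono:
  fixes x y :: real
  assumes "x \<le> y" "y \<le> 1"
  shows "x * exp (- x) \<le> y * exp (- y)"
proof (rule DERIV_nonneg_imp_nondecreasing[OF \<open>x \<le> y\<close>])
  fix t assume "t \<le> y"
  then have "0 \<le> (1 - t) * exp (- t)" using \<open>y \<le> 1\<close> by simp
  moreover have "((\<lambda>t. t * exp (- t)) has_real_derivative (1 - t) * exp (- t)) (at t)"
    by (auto intro!: derivative_eq_intros simp: algebra_simps)
  ultimately show "\<exists>D. ((\<lambda>t. t * exp (- t)) has_real_derivative D) (at t) \<and> 0 \<le> D"
    by blast
qed

text \<open>\<open>battery_sum p B q = (b\<^sup>B - a\<^sup>B) / (b - a)\<close> for \<open>a = p(1-q)\<close>, \<open>b = q(1-p)\<close>;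
  the ratio \<open>\<rho>\<close> in \<open>r\<^sub>B\<close> is \<open>a / b\<close>.\<close>
definition battery_sum :: "real \<Rightarrow> nat \<Rightarrow> real \<Rightarrow> real" where
  "battery_sum p B q = (\<Sum>i<B. (p * (1 - q)) ^ (B - Suc i) * (q * (1 - p)) ^ i)"

lemma battery_sum_nonneg:
  assumes "0 \<le> p" "p \<le> 1" "0 \<le> q" "q \<le> 1"
  shows "0 \<le> battery_sum p B q"
  unfolding battery_sum_def using assms by (intro sum_nonneg) simp

lemma battery_sum_one: "B \<ge> 1 \<Longrightarrow> battery_sum p B 1 = (1 - p) ^ (B - 1)"
  unfolding battery_sum_def
  by (subst sum.remove[of _ "B - 1"]) (auto intro!: sum.neutral)

lemma battery_sum_diag: "battery_sum p B p = real B * (p * (1 - p)) ^ (B - 1)"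
  unfolding battery_sum_def by (simp add: power_add[symmetric] mult.commute)

lemma f_B_denominator_pos:
  assumes "0 < p" "p < 1" "0 \<le> q" "q \<le> 1" "B \<ge> 1"
  shows "0 < q * battery_sum p B q + (p * (1 - q)) ^ B"
proof (cases "q = 1")
  case True
  then show ?thesis using assms by (simp add: battery_sum_one zero_power)
next
  case False
  then have "0 < (p * (1 - q)) ^ B" using assms by simp
  moreover have "0 \<le> q * battery_sum p B q" using battery_sum_nonneg assms by simp
  ultimately show ?thesis by linarith
qed

lemma f_B_rational:
  assumes "0 < p" "p < 1" "0 \<le> q" "q \<le> 1" "B \<ge> 1"
  shows "f_B p B q = p * q * battery_sum p B q / (q * battery_sum p B q + (p * (1 - q)) ^ B)"
    (is "_ = p * q * ?S / ?D")
proof -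
  define a where "a = p * (1 - q)"
  define b where "b = q * (1 - p)"
  have D_pos: "0 < ?D" using f_B_denominator_pos[OF assms] .
  have geometric: "b ^ B - a ^ B = (q - p) * ?S"
    unfolding battery_sum_def a_def[symmetric] b_def[symmetric] power_diff_sumr2
    by (simp add: a_def b_def algebra_simps)
  consider "q = 0" | "q \<noteq> 0" "B = 1" | "q \<noteq> 0" "B \<noteq> 1" "q = p" | "q \<noteq> 0" "B \<noteq> 1" "q \<noteq> p"
    by blast
  then show ?thesis
  proof cases
    case 1
    then show ?thesis by (simp add: f_B_def)
  next
    case 2
    then show ?thesis using D_pos
      by (simp add: f_B_def r_B_def battery_sum_def field_simps)
  next
    case 3
    define Q where "Q = (p * (1 - p)) ^ (B - 1)"
    have "0 < Q" using assms by (simp add: Q_def)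
    have num: "p * q * ?S = (p * Q) * (real B * p)"
      using 3 by (simp add: battery_sum_diag Q_def)
    have "(p * (1 - q)) ^ B = p * (1 - p) * Q"
      using 3 \<open>B \<ge> 1\<close> by (simp add: Q_def power_eq_if)
    then have den: "?D = (p * Q) * (real B + 1 - p)"
      using 3 by (simp add: battery_sum_diag Q_def algebra_simps)
    have "p * q * ?S / ?D = p * (real B / (real B + 1 - p))"
      unfolding num den using \<open>0 < Q\<close> \<open>0 < p\<close> by simp
    then show ?thesis using 3 by (simp add: f_B_def r_B_def)
  next
    case 4
    have "0 < b" using 4 assms by (simp add: b_def)
    have bB: "b ^ B = a ^ B + (q - p) * ?S" using geometric by simp
    have den: "q * b ^ B - p * a ^ B = (q - p) * ?D"
      unfolding bB a_def by (simp add: algebra_simps)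
    then have "q * b ^ B - p * a ^ B \<noteq> 0" using 4 D_pos by simp
    then have "f_B p B q = p * q * (b ^ B - a ^ B) / (q * b ^ B - p * a ^ B)"
      using 4 \<open>0 < b\<close>
      by (simp add: f_B_def r_B_def Let_def a_def[symmetric] b_def[symmetric] power_divide
          field_simps)
    also have "\<dots> = p * q * ?S / ?D"
      unfolding geometric den using 4 by simp
    finally show ?thesis .
  qed
qed

lemma f_B_one: "0 < p \<Longrightarrow> p < 1 \<Longrightarrow> B \<ge> 1 \<Longrightarrow> f_B p B 1 = p"
  unfolding f_B_def r_B_def by (auto simp: Let_def power_0_left)

lemma f_B_bounds:
  assumes "0 < p" "p < 1" "0 \<le> q" "q \<le> 1" "B \<ge> 1"
  shows "0 \<le> f_B p B q" "f_B p B q \<le> p"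
proof -
  let ?S = "battery_sum p B q" and ?D = "q * battery_sum p B q + (p * (1 - q)) ^ B"
  have "0 < ?D" using f_B_denominator_pos[OF assms] .
  moreover have "0 \<le> p * q * ?S" using battery_sum_nonneg assms by simp
  moreover have "p * q * ?S \<le> p * ?D" using assms by (simp add: algebra_simps)
  ultimately show "0 \<le> f_B p B q" "f_B p B q \<le> p"
    unfolding f_B_rational[OF assms] by (simp_all add: divide_le_eq)
qed

lemma continuous_on_f_B:
  assumes "0 < p" "p < 1" "B \<ge> 1"
  shows "continuous_on {0..1} (f_B p B)"
proof -
  have "continuous_on {0..1} (\<lambda>q. p * q * battery_sum p B q
                                     / (q * battery_sum p B q + (p * (1 - q)) ^ B))"
    unfolding battery_sum_def
    using f_B_denominator_pos[OF assms(1,2) _ _ assms(3)]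
    by (intro continuous_intros) (auto simp: battery_sum_def less_le)
  then show ?thesis
    by (rule continuous_on_eq) (metis atLeastAtMost_iff f_B_rational assms)
qed

lemma f_B_image:
  assumes "0 < p" "p < 1" "B \<ge> 1"
  shows "f_B p B ` {0..1} = {0..p}"
proof
  show "f_B p B ` {0..1} \<subseteq> {0..p}" using f_B_bounds assms by auto
next
  show "{0..p} \<subseteq> f_B p B ` {0..1}"
  proof
    fix y assume "y \<in> {0..p}"
    moreover have "f_B p B 0 = 0" by (simp add: f_B_def)
    ultimately obtain q where "0 \<le> q" "q \<le> 1" "f_B p B q = y"
      using IVT'[of "f_B p B" 0 y 1] f_B_one continuous_on_f_B assms by auto
    then show "y \<in> f_B p B ` {0..1}" by force
  qed
qed

lemma lambda_max_pos:
  assumes "\<alpha> > 2" "d > 0" "\<theta> > 0"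
  shows "lambda_max d \<theta> \<alpha> > 0"
proof -
  have "2 * pi / \<alpha> < pi" using assms by (simp add: divide_less_eq)
  then have "sin (2 * pi / \<alpha>) > 0" using assms by (intro sin_gt_zero) auto
  then have "kappa \<alpha> > 0" using assms by (simp add: kappa_def)
  then show ?thesis using assms by (simp add: lambda_max_def)
qed

lemma C_B_eq_scaled:
  assumes "lambda_max d \<theta> \<alpha> \<noteq> 0" "y = lam * f_B p B q / lambda_max d \<theta> \<alpha>"
  shows "C_B lam p B \<alpha> d \<theta> q = lambda_max d \<theta> \<alpha> * ln (1 + \<theta>) * (y * exp (- y))"
proof -
  have "- lam * f_B p B q / lambda_max d \<theta> \<alpha> = - y" using assms by simp
  then show ?thesis using assms by (simp add: C_B_def)
qed

theorem theorem2:
  fixes lam p \<alpha> d \<theta> :: real and B :: nat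
  assumes "lam > 0" and "0 < p" and "p < 1" and "B \<ge> 1"
    and "\<alpha> > 2" and "d > 0" and "\<theta> > 0"
  shows "((\<exists>qh\<in>{0..1}. f_B p B qh = lambda_max d \<theta> \<alpha> / lam) \<longrightarrow>
            (\<forall>qh\<in>{0..1}. f_B p B qh = lambda_max d \<theta> \<alpha> / lam \<longrightarrow>
               (\<forall>q\<in>{0..1}. C_B lam p B \<alpha> d \<theta> q \<le> C_B lam p B \<alpha> d \<theta> qh)))
       \<and> ((\<not> (\<exists>qh\<in>{0..1}. f_B p B qh = lambda_max d \<theta> \<alpha> / lam)) \<longrightarrow>
            (\<forall>q\<in>{0..1}. C_B lam p B \<alpha> d \<theta> q \<le> C_B lam p B \<alpha> d \<theta> 1))"
proof -
  define L where "L = lambda_max d \<theta> \<alpha>"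
  define y where "y q = lam * f_B p B q / L" for q
  have "L > 0" using lambda_max_pos assms by (simp add: L_def)
  then have scale: "L * ln (1 + \<theta>) > 0" using assms by simp
  have C: "C_B lam p B \<alpha> d \<theta> q = L * ln (1 + \<theta>) * (y q * exp (- y q))" for q
    using C_B_eq_scaled \<open>L > 0\<close> by (simp add: L_def y_def)
  have "C_B lam p B \<alpha> d \<theta> q \<le> C_B lam p B \<alpha> d \<theta> qh" if "f_B p B qh = L / lam" for q qh
  proof -
    have "y qh = 1" using that \<open>L > 0\<close> assms by (simp add: y_def)
    then show ?thesis
      unfolding C using scale mult_exp_neg_le_exp_neg_one by (intro mult_left_mono) auto
  qed
  moreover have "C_B lam p B \<alpha> d \<theta> q \<le> C_B lam p B \<alpha> d \<theta> 1"
    if "\<not> (\<exists>qh\<in>{0..1}. f_B p B qh = L / lam)" "q \<in> {0..1}" for q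
  proof -
    have "L / lam \<notin> {0..p}" using that(1) f_B_image[of p B] assms by force
    then have "lam * p < L" using \<open>L > 0\<close> assms by (auto simp: field_simps)
    then have "y 1 < 1" using f_B_one assms \<open>L > 0\<close> by (simp add: y_def)
    moreover have "y q \<le> y 1"
      using f_B_bounds(2)[of p q B] f_B_one that(2) assms \<open>L > 0\<close>
      by (simp add: y_def divide_right_mono)
    ultimately show ?thesis
      unfolding C using scale mult_exp_neg_mono by (intro mult_left_mono) auto
  qed
  ultimately show ?thesis unfolding L_def by blast
qed

end
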